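(* Let $\{\mathsf{P}_\theta : \theta \in \mathbb{T}\}$ be a statistical model for data $Y$ taking values in $\mathbb{Y}$, with likelihood $\theta \mapsto L_y(\theta)$ and maximum likelihood estimator $\hat\theta_y$ existing for each $y$. Let $R(y,\theta) = L_y(\theta)/L_y(\hat\theta_y)$, let $\pi_y(\theta) = \mathsf{P}_\theta\{R(Y,\theta) \le R(y,\theta)\}$, and define $\overline{\Pi}_y(H) = \sup_{\theta \in H} \pi_y(\theta)$ and $\underline{\Pi}_y(H) = 1 - \overline{\Pi}_y(H^c)$ for $H \subseteq \mathbb{T}$. Then the following uniform validity property holds: \[ \sup_{\Theta \in \mathbb{T}} \mathsf{P}_\Theta\Big( \bigcup_{H \subseteq \mathbb{T}:\, H \ni \Theta} \{ \overline{\Pi}_Y(H) \le \alpha \} \Big) \le \alpha, \quad \alpha \in [0,1], \] i.e., the probability that $\overline{\Pi}_Y(H) \le \alpha$ for some true hypothesis $H \ni \Theta$ is at most $\alpha$. Equivalently, \[ \sup_{\Theta \in \mathbb{T}} \mathsf{P}_\Theta\Big( \bigcup_{H \subseteq \mathbb{T}:\, H \not\ni \Theta} \{ \underline{\Pi}_Y(H) \ge 1-\alpha \} \Big) \le \alpha, \quad \alpha \in [0,1], \] i.e., the probability that $\underline{\Pi}_Y(H) \ge 1-\alpha$ for some false hypothesis $H \not\ni \Theta$ is at most $\alpha$.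
   Context: Here $\Theta$ denotes the true parameter value and $Y \sim \mathsf{P}_\Theta$. The pair $(\underline{\Pi}_y, \overline{\Pi}_y)$ is the necessity–possibility measure pair (the inferential model output) determined by the possibility contour $\pi_y$; the union is over all subsets $H$ of the parameter space $\mathbb{T}$ satisfying the stated membership condition. *)

theory Defs
  imports "HOL-Probability.Probability"
begin

definition rel_lik :: "('y \<Rightarrow> 't \<Rightarrow> real) \<Rightarrow> ('y \<Rightarrow> 't) \<Rightarrow> 'y \<Rightarrow> 't \<Rightarrow> real" where
  "rel_lik L mle y \<theta> = L y \<theta> / L y (mle y)"

definition contour :: "('t \<Rightarrow> 'y measure) \<Rightarrow> ('y \<Rightarrow> 't \<Rightarrow> real) \<Rightarrow> ('y \<Rightarrow> 't) \<Rightarrow> 'y \<Rightarrow> 't \<Rightarrow> real" where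
  "contour P L mle y \<theta> =
     measure (P \<theta>) {y' \<in> space (P \<theta>). rel_lik L mle y' \<theta> \<le> rel_lik L mle y \<theta>}"

definition upper_poss :: "('t \<Rightarrow> 'y measure) \<Rightarrow> ('y \<Rightarrow> 't \<Rightarrow> real) \<Rightarrow> ('y \<Rightarrow> 't) \<Rightarrow> 'y \<Rightarrow> 't set \<Rightarrow> real" where
  "upper_poss P L mle y H = (SUP \<theta>\<in>H. contour P L mle y \<theta>)"

definition lower_nec :: "('t \<Rightarrow> 'y measure) \<Rightarrow> ('y \<Rightarrow> 't \<Rightarrow> real) \<Rightarrow> ('y \<Rightarrow> 't) \<Rightarrow> 'y \<Rightarrow> 't set \<Rightarrow> real" where
  "lower_nec P L mle y H = 1 - upper_poss P L mle y (- H)"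

end

theory Submission
  imports Defs
begin

text \<open>
  At the true parameter \<Theta>, the contour is the distribution function F of the relative
  likelihood R(Y, \<Theta>) evaluated at R(Y, \<Theta>) itself. For any real random variable X, the
  event F(X) \<le> \<alpha> has probability at most \<alpha>, since {t. F t \<le> \<alpha>} is a down-set of the form
  {..s} or {..<s} on which F stays below \<alpha>. Both events of the theorem coincide with the event
  that the contour at \<Theta> is at most \<alpha>: the hypothesis H = {\<Theta>} is extremal for the first, and
  the second is the first with H replaced by its complement. Beyond the measurability of
  R(\<cdot>, \<Theta>), nothing about the likelihood is used.
\<close>

lemma down_closed_cases:
  fixes S :: "'a::conditionally_complete_linorder set"
  assumes down: "\<And>t u. u \<in> S \<Longrightarrow> t \<le> u \<Longrightarrow> t \<in> S"
  obtains "S = {}" | "S = UNIV" | s where "S = {..s}" | s where "S = {..<s}"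
proof -
  consider "S = {}" | "\<not> bdd_above S" | "S \<noteq> {}" "bdd_above S" "Sup S \<in> S"
    | "S \<noteq> {}" "bdd_above S" "Sup S \<notin> S"
    by blast
  then show thesis
  proof cases
    case 1
    then show thesis by (rule that(1))
  next
    case 2
    have "t \<in> S" for t
    proof -
      from 2 obtain u where "u \<in> S" "\<not> u \<le> t"
        unfolding bdd_above_def by blast
      then show ?thesis
        using down[of u t] by simp
    qed
    then show thesis by (intro that(2)) blast
  next
    case 3
    then have "S = {..Sup S}"
      by (auto intro: cSup_upper down)
    then show thesis by (rule that(3))
  next
    case 4
    have "t \<in> S" if "t < Sup S" for t
    proof -
      from that obtain u where "u \<in> S" "t < u"
        using less_cSup_iff[OF 4(1,2)] by blast
      then show ?thesis
        using down[of u t] by simp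
    qed
    moreover have "t < Sup S" if "t \<in> S" for t
      using cSup_upper[OF that 4(2)] that 4(3) by (auto simp: order_le_less)
    ultimately have "S = {..<Sup S}"
      by auto
    then show thesis by (rule that(4))
  qed
qed

lemma mono_sublevel_set_cases [consumes 1, case_names empty UNIV atMost lessThan]:
  fixes F :: "'a::conditionally_complete_linorder \<Rightarrow> 'b::order"
  assumes "mono F"
  obtains "{t. F t \<le> c} = {}" | "{t. F t \<le> c} = UNIV"
    | s where "{t. F t \<le> c} = {..s}" | s where "{t. F t \<le> c} = {..<s}"
proof (rule down_closed_cases[of "{t. F t \<le> c}"])
  show "t \<in> {t. F t \<le> c}" if "u \<in> {t. F t \<le> c}" "t \<le> u" for t u
    using that order_trans[OF monoD[OF assms \<open>t \<le> u\<close>]] by simp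
qed (erule that)+

lemma (in finite_borel_measure) mono_cdf: "mono (cdf M)"
  by (simp add: mono_def cdf_nondecreasing)

lemma (in real_distribution) measure_lessThan_le_of_cdf_le:
  assumes "\<And>t. t < s \<Longrightarrow> cdf M t \<le> \<alpha>"
  shows "measure M {..<s} \<le> \<alpha>"
proof (rule tendsto_le[OF trivial_limit_at_left_real tendsto_const cdf_at_left])
  show "\<forall>\<^sub>F t in at_left s. cdf M t \<le> \<alpha>"
    by (rule eventually_at_leftI[of "s - 1"]) (auto intro: assms)
qed

lemma (in real_distribution) measure_cdf_le:
  assumes "0 \<le> \<alpha>"
  shows "measure M {t. cdf M t \<le> \<alpha>} \<le> \<alpha>"
  using mono_cdf
proof (cases rule: mono_sublevel_set_cases[where c = \<alpha>])
  case empty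
  then show ?thesis using assms by simp
next
  case UNIV
  have "1 \<le> \<alpha>"
  proof (rule tendsto_le[OF trivial_limit_at_top_linorder tendsto_const cdf_lim_at_top_prob])
    show "\<forall>\<^sub>F t in at_top. cdf M t \<le> \<alpha>"
      using UNIV[THEN eqset_imp_iff] by simp
  qed
  then show ?thesis
    using prob_le_1 order_trans by blast
next
  case (atMost s)
  have "cdf M s \<le> \<alpha>"
    using atMost[THEN eqset_imp_iff, of s] by simp
  with atMost show ?thesis
    by (simp add: cdf_def2)
next
  case (lessThan s)
  have "cdf M t \<le> \<alpha>" if "t < s" for t
    using lessThan[THEN eqset_imp_iff, of t] that by simp
  with lessThan show ?thesis
    by (simp add: measure_lessThan_le_of_cdf_le)
qed

lemma (in prob_space) prob_cdf_le:
  fixes X :: "'a \<Rightarrow> real"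
  assumes X: "random_variable borel X" and "0 \<le> \<alpha>"
  shows "prob {\<omega> \<in> space M. cdf (distr M borel X) (X \<omega>) \<le> \<alpha>} \<le> \<alpha>"
proof -
  let ?F = "cdf (distr M borel X)"
  interpret D: real_distribution "distr M borel X"
    using X by simp
  have "?F \<in> borel_measurable borel"
    by (rule borel_measurable_mono[OF D.mono_cdf])
  then have F_le: "{t. ?F t \<le> \<alpha>} \<in> sets borel"
    by measurable
  have "prob {\<omega> \<in> space M. ?F (X \<omega>) \<le> \<alpha>} = prob (X -` {t. ?F t \<le> \<alpha>} \<inter> space M)"
    by (rule arg_cong[where f = prob]) auto
  also have "\<dots> = measure (distr M borel X) {t. ?F t \<le> \<alpha>}"
    using measure_distr[OF X F_le] by simp
  also have "\<dots> \<le> \<alpha>"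
    using D.measure_cdf_le[OF \<open>0 \<le> \<alpha>\<close>] .
  finally show ?thesis .
qed

lemma contour_eq_cdf:
  assumes R: "(\<lambda>y. rel_lik L mle y \<theta>) \<in> borel_measurable (P \<theta>)"
  shows "contour P L mle y \<theta>
    = cdf (distr (P \<theta>) borel (\<lambda>y'. rel_lik L mle y' \<theta>)) (rel_lik L mle y \<theta>)"
proof -
  have "{y' \<in> space (P \<theta>). rel_lik L mle y' \<theta> \<le> rel_lik L mle y \<theta>}
      = (\<lambda>y'. rel_lik L mle y' \<theta>) -` {..rel_lik L mle y \<theta>} \<inter> space (P \<theta>)"
    by auto
  then show ?thesis
    unfolding contour_def cdf_def2 using measure_distr[OF R] by simp
qed

lemma prob_contour_le:
  assumes "prob_space (P \<theta>)" and "(\<lambda>y. rel_lik L mle y \<theta>) \<in> borel_measurable (P \<theta>)"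
    and "0 \<le> \<alpha>"
  shows "measure (P \<theta>) {y \<in> space (P \<theta>). contour P L mle y \<theta> \<le> \<alpha>} \<le> \<alpha>"
  using prob_space.prob_cdf_le[OF assms]
  by (simp add: contour_eq_cdf[where P = P and \<theta> = \<theta>, OF assms(2)])

lemma ex_upper_poss_le_iff:
  assumes "\<And>\<theta>. prob_space (P \<theta>)"
  shows "(\<exists>H. \<theta> \<in> H \<and> upper_poss P L mle y H \<le> \<alpha>) \<longleftrightarrow> contour P L mle y \<theta> \<le> \<alpha>"
proof
  assume "\<exists>H. \<theta> \<in> H \<and> upper_poss P L mle y H \<le> \<alpha>"
  then obtain H where "\<theta> \<in> H" "upper_poss P L mle y H \<le> \<alpha>"
    by blast
  moreover have "bdd_above (contour P L mle y ` H)"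
    unfolding contour_def by (intro bdd_aboveI2[where M = 1] prob_space.prob_le_1[OF assms])
  ultimately show "contour P L mle y \<theta> \<le> \<alpha>"
    unfolding upper_poss_def by (meson cSUP_upper order_trans)
next
  assume "contour P L mle y \<theta> \<le> \<alpha>"
  then show "\<exists>H. \<theta> \<in> H \<and> upper_poss P L mle y H \<le> \<alpha>"
    by (intro exI[of _ "{\<theta>}"]) (simp add: upper_poss_def)
qed

lemma ex_lower_nec_ge_iff:
  assumes "\<And>\<theta>. prob_space (P \<theta>)"
  shows "(\<exists>H. \<theta> \<notin> H \<and> lower_nec P L mle y H \<ge> 1 - \<alpha>) \<longleftrightarrow> contour P L mle y \<theta> \<le> \<alpha>"
proof -
  have "(\<exists>H. \<theta> \<notin> H \<and> lower_nec P L mle y H \<ge> 1 - \<alpha>)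
      \<longleftrightarrow> (\<exists>H. \<theta> \<in> - H \<and> upper_poss P L mle y (- H) \<le> \<alpha>)"
    by (auto simp: lower_nec_def)
  also have "\<dots> \<longleftrightarrow> (\<exists>H. \<theta> \<in> H \<and> upper_poss P L mle y H \<le> \<alpha>)"
    by (metis double_complement)
  finally show ?thesis
    using ex_upper_poss_le_iff[OF assms] by simp
qed

theorem corollary2:
  fixes \<mu> :: "'y measure"
    and P :: "'t \<Rightarrow> 'y measure"
    and L :: "'y \<Rightarrow> 't \<Rightarrow> real"
    and mle :: "'y \<Rightarrow> 't"
    and \<alpha> :: real
  assumes L_nonneg: "\<And>y \<theta>. L y \<theta> \<ge> 0"
    and L_meas: "\<And>\<theta>. (\<lambda>y. L y \<theta>) \<in> borel_measurable \<mu>"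
    and P_density: "\<And>\<theta>. P \<theta> = density \<mu> (\<lambda>y. ennreal (L y \<theta>))"
    and P_prob: "\<And>\<theta>. prob_space (P \<theta>)"
    and mle_max: "\<And>y \<theta>. L y \<theta> \<le> L y (mle y)"
    and Lmax_meas: "(\<lambda>y. L y (mle y)) \<in> borel_measurable \<mu>"
    and \<alpha>_range: "0 \<le> \<alpha>" "\<alpha> \<le> 1"
  shows "(SUP \<Theta>. measure (P \<Theta>)
            {y \<in> space (P \<Theta>). \<exists>H. \<Theta> \<in> H \<and> upper_poss P L mle y H \<le> \<alpha>}) \<le> \<alpha>
       \<and> (SUP \<Theta>. measure (P \<Theta>)
            {y \<in> space (P \<Theta>). \<exists>H. \<Theta> \<notin> H \<and> lower_nec P L mle y H \<ge> 1 - \<alpha>}) \<le> \<alpha>"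
proof -
  have R_meas: "(\<lambda>y. rel_lik L mle y \<Theta>) \<in> borel_measurable (P \<Theta>)" for \<Theta>
  proof -
    have sets_eq: "sets (P \<Theta>) = sets \<mu>"
      using P_density by simp
    show ?thesis
      unfolding rel_lik_def measurable_cong_sets[OF sets_eq refl]
      using L_meas Lmax_meas by measurable
  qed
  have "measure (P \<Theta>) {y \<in> space (P \<Theta>). contour P L mle y \<Theta> \<le> \<alpha>} \<le> \<alpha>" for \<Theta>
    by (rule prob_contour_le[OF P_prob R_meas \<alpha>_range(1)])
  then show ?thesis
    by (intro conjI cSUP_least)
       (simp_all only: ex_upper_poss_le_iff[OF P_prob] ex_lower_nec_ge_iff[OF P_prob]
          UNIV_not_empty not_False_eq_True)
qed

end
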